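(* Let $r>4$, $\Omega=[-r,r]$, and let $K:\mathbb{R}\to[0,\infty)$ be bounded, even, nonincreasing on $(0,\infty)$, with ${\rm supp}(K)=[-2,2]$ and $\int_{\mathbb{R}}K\ge2$. Let $$B_1=\{u\in L^2(\Omega):\ u(x)=1\text{ for }x>1,\ u(x)=-1\text{ for }x<-1,\ u\text{ odd and nondecreasing}\}.$$ Then the map $u\mapsto f(Tu)$ sends $B_1$ into $B_1$.
   Context: $f$ is the saturation function $f(x)=1$ for $x>1$, $f(x)=x$ for $x\in[-1,1]$, $f(x)=-1$ for $x<-1$. For $u\in L^2(\Omega)$, $Tu(x)=\int_{\mathbb{R}}K(x-y)\widetilde u(y)\,dy$ for $x\in\Omega$, where $\widetilde u$ is the extension of $u$ by $0$ outside $\Omega$. *)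

theory Defs
  imports "HOL-Analysis.Analysis"
begin

definition sat :: "real \<Rightarrow> real" where
  "sat x = (if x > 1 then 1 else if x < -1 then -1 else x)"

text \<open>Omega = [-r,r]. Functions on Omega are represented by real functions whose
values outside Omega are irrelevant.\<close>

definition convT :: "(real \<Rightarrow> real) \<Rightarrow> real \<Rightarrow> (real \<Rightarrow> real) \<Rightarrow> real \<Rightarrow> real" where
  "convT K r u x = (LINT y|lborel. K (x - y) * (indicator {-r..r} y * u y))"

definition L2_on :: "real \<Rightarrow> (real \<Rightarrow> real) \<Rightarrow> bool" where
  "L2_on r u \<longleftrightarrow> (\<lambda>x. indicator {-r..r} x * u x) \<in> borel_measurable lborel
     \<and> integrable lborel (\<lambda>x. indicator {-r..r} x * (u x)\<^sup>2)"

definition B1 :: "real \<Rightarrow> (real \<Rightarrow> real) set" where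
  "B1 r = {u. L2_on r u
     \<and> (\<forall>x\<in>{-r..r}. x > 1 \<longrightarrow> u x = 1)
     \<and> (\<forall>x\<in>{-r..r}. x < -1 \<longrightarrow> u x = -1)
     \<and> (\<forall>x\<in>{-r..r}. u (-x) = - u x)
     \<and> mono_on {-r..r} u}"

end

theory Submission imports Defs begin

text \<open>
  Let \<open>g\<close> be the extension of \<open>u\<close> by zero. Since \<open>K\<close> is even and \<open>g\<close> odd, \<open>Tu\<close> is odd.
  For \<open>|x| \<le> 1\<close> the kernel only sees \<open>g\<close> on \<open>[-3, 3] \<subseteq> \<Omega>\<close>, where it is nondecreasing,
  so \<open>Tu\<close> is nondecreasing on \<open>[-1, 1]\<close>. For \<open>1 < x \<le> r\<close>, folding the integral by oddness gives
  \<open>Tu(x) = \<integral>\<^sub>0\<^sup>\<infinity> (K(x-y) - K(x+y)) g(y) dy\<close>, whose integrand is nonnegative and equals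
  \<open>K(x-y)\<close> for \<open>1 < y \<le> r\<close>; hence \<open>Tu(x) \<ge> \<integral>\<^bsub>[x-r, x-1]\<^esub> K\<close>. Because \<open>r > 4\<close>, this window contains
  \<open>[0, 2]\<close>, \<open>[-2, 0]\<close> or \<open>[-1, 1]\<close>, each of \<open>K\<close>-mass at least 1 by evenness, monotonicity and
  \<open>\<integral>K \<ge> 2\<close>. So \<open>Tu \<ge> 1\<close> on \<open>(1, r]\<close>, and saturating yields an element of \<open>B\<^sub>1\<close>.
\<close>

lemma lborel_integral_translate:
  fixes f :: "real \<Rightarrow> real"
  shows "(LBINT x. f x) = (LBINT x. f (t + x))"
  using lborel_integral_real_affine[of 1 f t] by simp

lemma lborel_integral_reflect:
  fixes f :: "real \<Rightarrow> real"
  shows "(LBINT x. f x) = (LBINT x. f (t - x))"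
  using lborel_integral_real_affine[of "-1" f t] by simp

lemma lborel_integrable_translate:
  fixes f :: "real \<Rightarrow> real"
  assumes "integrable lborel f"
  shows "integrable lborel (\<lambda>x. f (t + x))"
  using lborel_integrable_real_affine[OF assms, of 1 t] by simp

lemma lborel_integrable_reflect:
  fixes f :: "real \<Rightarrow> real"
  assumes "integrable lborel f"
  shows "integrable lborel (\<lambda>x. f (t - x))"
  using lborel_integrable_real_affine[OF assms, of "-1" t] by simp

lemma integrable_mult_bounded:
  fixes k g :: "'a \<Rightarrow> real"
  assumes "integrable M k" "g \<in> borel_measurable M" "\<And>y. \<bar>g y\<bar> \<le> C"
  shows "integrable M (\<lambda>y. k y * g y)"
proof (rule Bochner_Integration.integrable_bound)
  show "integrable M (\<lambda>y. C * k y)"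
    using assms(1) by simp
  show "AE y in M. norm (k y * g y) \<le> norm (C * k y)"
  proof (intro AE_I2)
    fix y
    have "\<bar>g y\<bar> \<le> \<bar>C\<bar>"
      using assms(3)[of y] by linarith
    then show "norm (k y * g y) \<le> norm (C * k y)"
      by (simp add: abs_mult mult.commute[of "\<bar>C\<bar>"] mult_left_mono)
  qed
qed (use assms(1,2) borel_measurable_integrable in measurable)

lemma convolution_odd:
  fixes K g :: "real \<Rightarrow> real"
  assumes "\<And>x. K (- x) = K x" "\<And>y. g (- y) = - g y"
  shows "(LBINT y. K (- x - y) * g y) = - (LBINT y. K (x - y) * g y)"
proof -
  have "(LBINT y. K (- x - y) * g y) = (LBINT y. K (- x + y) * g (- y))"
    by (subst lborel_integral_reflect[where t=0]) simp
  also have "\<dots> = (LBINT y. - (K (x - y) * g y))"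
    using assms(1)[of "x - _"] by (simp add: assms(2))
  finally show ?thesis by simp
qed

lemma convolution_mono:
  fixes K g :: "real \<Rightarrow> real"
  assumes K: "integrable lborel K" "\<And>s. 0 \<le> K s" "\<And>s. d < \<bar>s\<bar> \<Longrightarrow> K s = 0"
    and g: "g \<in> borel_measurable lborel" "\<And>y. \<bar>g y\<bar> \<le> C" "mono_on {x-d..x'+d} g"
    and "x \<le> x'"
  shows "(LBINT y. K (x - y) * g y) \<le> (LBINT y. K (x' - y) * g y)"
proof -
  have *: "(LBINT y. K (t - y) * g y) = (LBINT s. K s * g (t - s))" for t
    by (subst lborel_integral_reflect[where t=t]) simp
  have "integrable lborel (\<lambda>s. K s * g (t - s))" for t
    using g(1,2) by (intro integrable_mult_bounded[OF K(1)]) auto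
  then show ?thesis
    unfolding *
  proof (intro integral_mono)
    fix s
    show "K s * g (x - s) \<le> K s * g (x' - s)"
    proof (cases "d < \<bar>s\<bar>")
      case False
      then have "g (x - s) \<le> g (x' - s)"
        using \<open>x \<le> x'\<close> by (intro mono_onD[OF g(3)]) auto
      then show ?thesis
        using K(2) by (rule mult_left_mono)
    qed (simp add: K(3))
  qed
qed

lemma convolution_odd_eq_halfline:
  fixes K g :: "real \<Rightarrow> real"
  assumes K: "integrable lborel K" "\<And>x. K (- x) = K x"
    and g: "g \<in> borel_measurable lborel" "\<And>y. \<bar>g y\<bar> \<le> C" "\<And>y. g (- y) = - g y"
  shows "(LBINT y. K (x - y) * g y) = (LBINT y:{0<..}. (K (x - y) - K (x + y)) * g y)"
proof -
  define F where "F y = K (x - y) * g y" for y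
  have "integrable lborel F"
    unfolding F_def by (rule integrable_mult_bounded[OF lborel_integrable_reflect[OF K(1)] g(1,2)])
  then have F: "integrable lborel (\<lambda>y. indicator A y * F y)" if "A \<in> sets lborel" for A
    using integrable_mult_indicator[OF that, of F] by simp
  have "g 0 = 0"
    using g(3)[of 0] by simp
  then have "(LBINT y. F y) = (LBINT y. indicator {0<..} y * F y + indicator {..<0} y * F y)"
    by (intro Bochner_Integration.integral_cong) (auto simp: F_def indicator_def)
  also have "\<dots> = (LBINT y. indicator {0<..} y * F y) + (LBINT y. indicator {..<0} y * F y)"
    by (intro Bochner_Integration.integral_add F) auto
  also have "(LBINT y. indicator {..<0} y * F y) = (LBINT y. indicator {0<..} y * F (- y))"
    by (subst lborel_integral_reflect[where t=0]) (simp add: indicator_def)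
  also have "(LBINT y. indicator {0<..} y * F y) + \<dots> = (LBINT y. indicator {0<..} y * (F y + F (- y)))"
  proof -
    have "integrable lborel (\<lambda>y. indicator {0<..} y * F (- y))"
      using lborel_integrable_reflect[OF F[of "{..<0}"], of 0] by (simp add: indicator_def)
    then show ?thesis
      by (subst Bochner_Integration.integral_add[symmetric]) (auto intro: F simp: distrib_left)
  qed
  finally show ?thesis
    unfolding set_lebesgue_integral_def F_def using K(2)[of "x + _"] g(3)
    by (simp add: algebra_simps)
qed

locale symmetric_decreasing_kernel =
  fixes K :: "real \<Rightarrow> real"
  assumes integrable: "integrable lborel K"
    and nonneg: "0 \<le> K x"
    and even: "K (- x) = K x"
    and antimono: "0 < a \<Longrightarrow> a \<le> b \<Longrightarrow> K b \<le> K a"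
    and vanishes: "2 < \<bar>x\<bar> \<Longrightarrow> K x = 0"
begin

lemma borel_measurable_kernel[measurable]: "K \<in> borel_measurable lborel"
  using integrable by (rule borel_measurable_integrable)

lemma set_integrable: "A \<in> sets lborel \<Longrightarrow> set_integrable lborel A K"
  unfolding set_integrable_def by (rule integrable_mult_indicator[OF _ integrable])

lemma set_integral_mono_set:
  assumes "A \<in> sets lborel" "B \<in> sets lborel" "A \<subseteq> B"
  shows "(LBINT x:A. K x) \<le> (LBINT x:B. K x)"
  using assms set_integrable[of A] set_integrable[of B] nonneg
  unfolding set_lebesgue_integral_def set_integrable_def
  by (intro integral_mono) (auto simp: indicator_def)

lemma set_integral_cong_finite_diff:
  assumes "A \<in> sets lborel" "B \<in> sets lborel" "finite D" "\<And>x. x \<notin> D \<Longrightarrow> x \<in> A \<longleftrightarrow> x \<in> B"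
  shows "(LBINT x:A. K x) = (LBINT x:B. K x)"
proof (rule set_integral_cong_set)
  have "AE x in lborel. x \<notin> D"
    using assms(3) by (intro AE_discrete_difference) (auto simp: countable_finite)
  then show "AE x in lborel. x \<in> B \<longleftrightarrow> x \<in> A"
    by eventually_elim (use assms(4) in blast)
qed (use assms(1,2) in \<open>auto simp: set_borel_measurable_def\<close>)

lemma set_integral_reflect_even: "(LBINT x:A. K x) = (LBINT x:{x. - x \<in> A}. K x)"
  using set_integral_reflect[of A K] by (simp add: even)

lemma integral_eq_twice_half: "(LBINT x. K x) = 2 * (LBINT x:{0<..2}. K x)"
proof -
  have "(LBINT x. K x) = (LBINT x:{-2..<0} \<union> {0..2}. K x)"
    unfolding set_lebesgue_integral_def
    by (intro Bochner_Integration.integral_cong) (auto simp: indicator_def intro: vanishes)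
  also have "\<dots> = (LBINT x:{-2..<0}. K x) + (LBINT x:{0..2}. K x)"
    by (intro set_integral_Un set_integrable) auto
  also have "(LBINT x:{-2..<0}. K x) = (LBINT x:{0<..2}. K x)"
    by (subst set_integral_reflect_even) (auto intro!: arg_cong2[where f="set_lebesgue_integral lborel"])
  also have "(LBINT x:{0..2}. K x) = (LBINT x:{0<..2}. K x)"
    by (rule set_integral_cong_finite_diff[where D="{0}"]) auto
  finally show ?thesis by simp
qed

lemma set_integral_tail_le: "(LBINT x:{1<..2}. K x) \<le> (LBINT x:{0<..1}. K x)"
proof -
  have "(LBINT x:{1<..2}. K x) = (LBINT x. indicator {1<..2} (1 + x) * K (1 + x))"
    unfolding set_lebesgue_integral_def by (subst lborel_integral_translate[where t=1]) simp
  also have "\<dots> \<le> (LBINT x:{0<..1}. K x)"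
    unfolding set_lebesgue_integral_def
  proof (rule integral_mono)
    show "integrable lborel (\<lambda>x. indicator {1<..2} (1 + x) * K (1 + x))"
      using lborel_integrable_translate[OF set_integrable[of "{1<..2}", unfolded set_integrable_def]]
      by simp
    show "integrable lborel (\<lambda>x. indicator {0<..1} x *\<^sub>R K x)"
      using set_integrable[of "{0<..1}"] by (simp add: set_integrable_def)
    fix x
    show "indicator {1<..2} (1 + x) * K (1 + x) \<le> indicator {0<..1} x *\<^sub>R K x"
      using antimono[of x "1 + x"] nonneg[of x] by (auto simp: indicator_def)
  qed
  finally show ?thesis .
qed

lemma set_integrals_ge_1:
  assumes "2 \<le> (LBINT x. K x)"
  shows "1 \<le> (LBINT x:{0<..2}. K x)" "1 \<le> (LBINT x:{-2..<0}. K x)"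
    and "1 \<le> (LBINT x:{-1..<1}. K x)"
proof -
  show half: "1 \<le> (LBINT x:{0<..2}. K x)"
    using assms integral_eq_twice_half by simp
  have "(LBINT x:{-2..<0}. K x) = (LBINT x:{0<..2}. K x)"
    by (subst set_integral_reflect_even) (auto intro!: arg_cong2[where f="set_lebesgue_integral lborel"])
  with half show "1 \<le> (LBINT x:{-2..<0}. K x)" by simp
  have "(LBINT x:{0<..2}. K x) = (LBINT x:{0<..1}. K x) + (LBINT x:{1<..2}. K x)"
    by (subst set_integral_Un[symmetric]) (auto intro!: set_integrable arg_cong2[where f="set_lebesgue_integral lborel"])
  with half set_integral_tail_le have quarter: "1 \<le> 2 * (LBINT x:{0<..1}. K x)"
    by simp
  have "(LBINT x:{-1..<1}. K x) = (LBINT x:{-1..<0}. K x) + (LBINT x:{0..<1}. K x)"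
    by (subst set_integral_Un[symmetric]) (auto intro!: set_integrable arg_cong2[where f="set_lebesgue_integral lborel"])
  also have "(LBINT x:{-1..<0}. K x) = (LBINT x:{0<..1}. K x)"
    by (subst set_integral_reflect_even) (auto intro!: arg_cong2[where f="set_lebesgue_integral lborel"])
  also have "(LBINT x:{0..<1}. K x) = (LBINT x:{0<..1}. K x)"
    by (rule set_integral_cong_finite_diff[where D="{0, 1}"]) auto
  finally show "1 \<le> (LBINT x:{-1..<1}. K x)"
    using quarter by simp
qed

lemma window_integral_ge_1:
  assumes "2 \<le> (LBINT x. K x)" "4 \<le> r" "1 < x" "x \<le> r"
  shows "1 \<le> (LBINT s:{x-r..<x-1}. K s)"
proof -
  consider "2 < x - 1" | "2 \<le> r - x" | "x \<le> 3" "r - x < 2"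
    by linarith
  then obtain A where "A \<subseteq> {x-r..<x-1}" "A \<in> sets lborel" "1 \<le> (LBINT s:A. K s)"
  proof cases
    case 1
    show ?thesis
      by (rule that[of "{0<..2}"]) (use 1 assms set_integrals_ge_1(1) in auto)
  next
    case 2
    show ?thesis
      by (rule that[of "{-2..<0}"]) (use 2 assms set_integrals_ge_1(2) in auto)
  next
    case 3
    show ?thesis
      by (rule that[of "{-1..<1}"]) (use 3 assms set_integrals_ge_1(3) in auto)
  qed
  then show ?thesis
    using set_integral_mono_set[of A "{x-r..<x-1}"] by auto
qed

lemma window_le_convolution:
  assumes g: "g \<in> borel_measurable lborel" "\<And>y. \<bar>g y\<bar> \<le> C" "\<And>y. g (- y) = - g y"
    "\<And>y. 0 \<le> y \<Longrightarrow> 0 \<le> g y" "\<And>y. 1 < y \<Longrightarrow> y \<le> r \<Longrightarrow> g y = 1"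
    and "1 < x"
  shows "(LBINT s:{x-r..<x-1}. K s) \<le> (LBINT y. K (x - y) * g y)"
proof -
  have "(LBINT s:{x-r..<x-1}. K s) = (LBINT y. indicator {1<..r} y * K (x - y))"
    unfolding set_lebesgue_integral_def
    by (subst lborel_integral_reflect[where t=x])
      (auto intro!: Bochner_Integration.integral_cong simp: indicator_def)
  also have "\<dots> \<le> (LBINT y. indicator {0<..} y * ((K (x - y) - K (x + y)) * g y))"
  proof (rule integral_mono)
    have "integrable lborel (\<lambda>y. K (x - y))"
      by (rule lborel_integrable_reflect[OF integrable])
    then show "integrable lborel (\<lambda>y. indicator {1<..r} y * K (x - y))"
      using integrable_mult_indicator[of "{1<..r}" lborel "\<lambda>y. K (x - y)"] by simp
    have "integrable lborel (\<lambda>y. K (x - y) - K (x + y))"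
      using lborel_integrable_reflect[OF integrable] lborel_integrable_translate[OF integrable] by auto
    then have "integrable lborel (\<lambda>y. (K (x - y) - K (x + y)) * g y)"
      using g(1,2) by (rule integrable_mult_bounded)
    then show "integrable lborel (\<lambda>y. indicator {0<..} y * ((K (x - y) - K (x + y)) * g y))"
      using integrable_mult_indicator[of "{0<..}" lborel "\<lambda>y. (K (x - y) - K (x + y)) * g y"]
      by simp
  next
    fix y
    have "K (x + y) \<le> K (x - y)" if "0 < y"
    proof (cases "1 < y")
      case True
      then show ?thesis
        using vanishes[of "x + y"] nonneg \<open>1 < x\<close> by simp
    next
      case False
      then show ?thesis
        using antimono[of "x - y" "x + y"] \<open>1 < x\<close> \<open>0 < y\<close> by simp
    qed
    moreover have "K (x + y) = 0" if "1 < y"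
      using vanishes[of "x + y"] \<open>1 < x\<close> that by simp
    ultimately show "indicator {1<..r} y * K (x - y) \<le> indicator {0<..} y * ((K (x - y) - K (x + y)) * g y)"
      using g(4,5)[of y] by (auto simp: indicator_def)
  qed
  also have "\<dots> = (LBINT y. K (x - y) * g y)"
    using convolution_odd_eq_halfline[OF integrable _ g(1-3)] even
    by (simp add: set_lebesgue_integral_def)
  finally show ?thesis .
qed

end


lemma B1_zero_extension:
  assumes "u \<in> B1 r" "1 < r" and g_def: "\<And>y. g y = indicator {-r..r} y * u y"
  shows "g \<in> borel_measurable lborel" "\<bar>g y\<bar> \<le> 1" "g (- y) = - g y"
    and "0 \<le> y \<Longrightarrow> 0 \<le> g y" "1 < y \<Longrightarrow> y \<le> r \<Longrightarrow> g y = 1" "mono_on {-r..r} g"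
proof -
  from assms(1) have u: "L2_on r u" "\<And>x. x \<in> {-r..r} \<Longrightarrow> 1 < x \<Longrightarrow> u x = 1"
    "\<And>x. x \<in> {-r..r} \<Longrightarrow> u (- x) = - u x" "mono_on {-r..r} u"
    unfolding B1_def by auto
  show "g \<in> borel_measurable lborel"
    using u(1) unfolding L2_on_def g_def[abs_def] by simp
  have g_eq: "g x = u x" if "x \<in> {-r..r}" for x
    using that by (simp add: g_def)
  show "mono_on {-r..r} g"
    using u(4) by (auto intro!: mono_onI dest: mono_onD simp: g_eq)
  have "u (- r) = -1" "u r = 1"
    using u(2)[of r] u(3)[of r] assms(2) by auto
  then show "\<bar>g y\<bar> \<le> 1"
    using mono_onD[OF u(4), of "- r" y] mono_onD[OF u(4), of y r] assms(2)
    by (auto simp: g_def indicator_def)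
  show "g (- y) = - g y"
    using u(3)[of y] by (auto simp: g_def indicator_def)
  show "0 \<le> g y" if "0 \<le> y"
    using mono_onD[OF u(4), of 0 y] u(3)[of 0] assms(2) that by (auto simp: g_def indicator_def)
  show "g y = 1" if "1 < y" "y \<le> r"
    using u(2)[of y] that assms(2) by (simp add: g_def)
qed

lemma sat_abs_le_1: "\<bar>sat t\<bar> \<le> 1"
  by (auto simp: sat_def)

lemma sat_minus: "sat (- t) = - sat t"
  by (simp add: sat_def)

lemma sat_eq_1: "1 \<le> t \<Longrightarrow> sat t = 1"
  by (simp add: sat_def)

lemma mono_sat: "mono sat"
  by (rule monoI) (simp add: sat_def)

lemma odd_mono_bounded_in_B1:
  assumes odd: "\<And>x. h (- x) = - h x" and one: "\<And>x. 1 < x \<Longrightarrow> x \<le> r \<Longrightarrow> h x = 1"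
    and mono: "mono_on {-r..r} h" and bounded: "\<And>x. \<bar>h x\<bar> \<le> 1"
  shows "h \<in> B1 r"
proof -
  have meas: "(\<lambda>x. indicator {-r..r} x * h x) \<in> borel_measurable lborel"
    using borel_measurable_mono_on_fnc[OF mono] borel_measurable_restrict_space_iff[of "{-r..r}" borel h]
    by simp
  have sq: "(\<lambda>x. indicator {-r..r} x * (h x)\<^sup>2) = (\<lambda>x. (indicator {-r..r} x * h x)\<^sup>2)"
    by (auto simp: fun_eq_iff indicator_def)
  have "integrable lborel (\<lambda>x. indicator {-r..r} x * (h x)\<^sup>2)"
  proof (rule Bochner_Integration.integrable_bound)
    show "integrable lborel (indicator {-r..r} :: real \<Rightarrow> real)"
      by (intro integrable_real_indicator) (auto simp: emeasure_lborel_Icc_eq)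
    show "AE x in lborel. norm (indicator {-r..r} x * (h x)\<^sup>2) \<le> norm (indicator {-r..r} x :: real)"
      using bounded by (intro AE_I2) (auto simp: indicator_def abs_square_le_1)
  qed (unfold sq, use meas in measurable)
  with meas have "L2_on r h"
    by (simp add: L2_on_def)
  moreover have "h x = - 1" if "x < -1" "- r \<le> x" for x
    using one[of "- x"] odd[of "- x"] that by simp
  ultimately show ?thesis
    unfolding B1_def using one mono odd by auto
qed

lemma sat_comp_in_B1:
  assumes odd: "\<And>x. T (- x) = - T x" and mono: "mono_on {-1..1} T"
    and ge: "\<And>x. 1 < x \<Longrightarrow> x \<le> r \<Longrightarrow> 1 \<le> T x"
  shows "(\<lambda>x. sat (T x)) \<in> B1 r"
proof (rule odd_mono_bounded_in_B1)
  show one: "sat (T x) = 1" if "1 < x" "x \<le> r" for x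
    using ge[OF that] by (rule sat_eq_1)
  have minus_one: "sat (T x) = - 1" if "x < -1" "- r \<le> x" for x
    using one[of "- x"] odd[of x] that by (simp add: sat_minus)
  show "mono_on {-r..r} (\<lambda>x. sat (T x))"
  proof (rule mono_onI)
    fix a b assume ab: "a \<in> {-r..r}" "b \<in> {-r..r}" "a \<le> b"
    consider "1 < b" | "a < -1" | "-1 \<le> a" "b \<le> 1"
      by linarith
    then show "sat (T a) \<le> sat (T b)"
    proof cases
      case 1
      then show ?thesis using one[of b] ab sat_abs_le_1[of "T a"] by auto
    next
      case 2
      then show ?thesis using minus_one[of a] ab sat_abs_le_1[of "T b"] by auto
    next
      case 3
      then show ?thesis using mono_onD[OF mono, of a b] ab monoD[OF mono_sat] by auto
    qed
  qed
qed (auto simp: odd sat_minus sat_abs_le_1)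

theorem mainTheorem10:
  fixes K :: "real \<Rightarrow> real" and r :: real
  assumes "r > 4"
    and "\<forall>x. K x \<ge> 0"
    and "bounded (range K)"
    and "\<forall>x. K (-x) = K x"
    and "antimono_on {0<..} K"
    and "closure {x. K x \<noteq> 0} = {-2..2}"
    and "(LINT x|lborel. K x) \<ge> 2"
    and "u \<in> B1 r"
  shows "(\<lambda>x. sat (convT K r u x)) \<in> B1 r"
proof -
  have "integrable lborel K"
    using assms(7) not_integrable_integral_eq by force
  moreover have "K x = 0" if "2 < \<bar>x\<bar>" for x
    using closure_subset[of "{x. K x \<noteq> 0}"] assms(6) that by fastforce
  ultimately interpret symmetric_decreasing_kernel K
    using assms(2,4,5) by unfold_locales (auto simp: monotone_on_def)
  define g where "g y = indicator {-r..r} y * u y" for y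
  have "1 < r"
    using assms(1) by simp
  note g = B1_zero_extension[OF assms(8) this g_def]
  have T: "convT K r u x = (LBINT y. K (x - y) * g y)" for x
    by (simp add: convT_def g_def)
  show ?thesis
    unfolding T
  proof (rule sat_comp_in_B1)
    show "(LBINT y. K (- x - y) * g y) = - (LBINT y. K (x - y) * g y)" for x
      using convolution_odd[of K g] assms(4,1) g by auto
    show "mono_on {-1..1} (\<lambda>x. LBINT y. K (x - y) * g y)"
    proof (rule mono_onI)
      fix a b :: real assume "a \<in> {-1..1}" "b \<in> {-1..1}" "a \<le> b"
      moreover have "mono_on {a-2..b+2} g"
        using calculation assms(1) by (auto intro: mono_on_subset[OF g(6)])
      ultimately show "(LBINT y. K (a - y) * g y) \<le> (LBINT y. K (b - y) * g y)"
        by (intro convolution_mono[OF integrable nonneg vanishes g(1,2)])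
    qed
    show "1 \<le> (LBINT y. K (x - y) * g y)" if "1 < x" "x \<le> r" for x
      using window_integral_ge_1[OF assms(7)] window_le_convolution[OF g(1-5)] assms(1) that
      by (meson less_imp_le order.trans)
  qed
qed

end
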